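(* A function $SO:[0,1]^2\to[0,1]$ is a semi-overlap function if and only if there exist two functions $f,g:[0,1]^2\to[0,1]$ such that $$SO(u,v)=\frac{f(u,v)}{f(u,v)+g(u,v)}\quad\text{for all }u,v\in[0,1],$$ and the following conditions hold: (1) $f(u,v)+g(u,v)\neq 0$ for all $u,v\in[0,1]$; (2) $f$ and $g$ are commutative, i.e. $f(u,v)=f(v,u)$ and $g(u,v)=g(v,u)$; (3) if $uv=0$, then $f(u,v)=0$; (4) if $uv=1$, then $g(u,v)=0$; (5) $f$ is increasing and $g$ is decreasing (in each variable); (6) $f$ is left-continuous and $f+g$ is right-continuous.
   Context: A binary function $h$ on $[0,1]^2$ is called left-continuous if for every $u\in[0,1]$ and every nonempty family $\{v_i\mid i\in I\}\subseteq[0,1]$ one has $h(u,\sup_{i\in I} v_i)=\sup_{i\in I} h(u,v_i)$; right-continuity is the analogous notion with limits from the right (infima). A semi-overlap function is a function $SO:[0,1]^2\to[0,1]$ such that for all $u,v\in[0,1]$: (S1) $SO(u,v)=SO(v,u)$; (S2) if $uv=0$ then $SO(u,v)=0$; (S3) if $uv=1$ then $SO(u,v)=1$; (S4) $SO$ is increasing in each variable; (S5) $SO$ is left-continuous. *)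

theory Defs
  imports Complex_Main
begin

text \<open>Functions on [0,1]^2 are modelled as curried real functions; all conditions
are relativised to the unit square.\<close>

definition maps_unit :: "(real \<Rightarrow> real \<Rightarrow> real) \<Rightarrow> bool" where
  "maps_unit h \<longleftrightarrow> (\<forall>u\<in>{0..1}. \<forall>v\<in>{0..1}. h u v \<in> {0..1})"

definition commutative_unit :: "(real \<Rightarrow> real \<Rightarrow> real) \<Rightarrow> bool" where
  "commutative_unit h \<longleftrightarrow> (\<forall>u\<in>{0..1}. \<forall>v\<in>{0..1}. h u v = h v u)"

definition increasing_unit :: "(real \<Rightarrow> real \<Rightarrow> real) \<Rightarrow> bool" where
  "increasing_unit h \<longleftrightarrow>
     (\<forall>u\<in>{0..1}. \<forall>u'\<in>{0..1}. \<forall>v\<in>{0..1}. u \<le> u' \<longrightarrow> h u v \<le> h u' v) \<and>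
     (\<forall>u\<in>{0..1}. \<forall>v\<in>{0..1}. \<forall>v'\<in>{0..1}. v \<le> v' \<longrightarrow> h u v \<le> h u v')"

definition decreasing_unit :: "(real \<Rightarrow> real \<Rightarrow> real) \<Rightarrow> bool" where
  "decreasing_unit h \<longleftrightarrow>
     (\<forall>u\<in>{0..1}. \<forall>u'\<in>{0..1}. \<forall>v\<in>{0..1}. u \<le> u' \<longrightarrow> h u' v \<le> h u v) \<and>
     (\<forall>u\<in>{0..1}. \<forall>v\<in>{0..1}. \<forall>v'\<in>{0..1}. v \<le> v' \<longrightarrow> h u v' \<le> h u v)"

definition left_continuous_unit :: "(real \<Rightarrow> real \<Rightarrow> real) \<Rightarrow> bool" where
  "left_continuous_unit h \<longleftrightarrow>
     (\<forall>u\<in>{0..1}. \<forall>V. V \<noteq> {} \<and> V \<subseteq> {0..1} \<longrightarrow> h u (Sup V) = (SUP v\<in>V. h u v))"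

definition right_continuous_unit :: "(real \<Rightarrow> real \<Rightarrow> real) \<Rightarrow> bool" where
  "right_continuous_unit h \<longleftrightarrow>
     (\<forall>u\<in>{0..1}. \<forall>V. V \<noteq> {} \<and> V \<subseteq> {0..1} \<longrightarrow> h u (Inf V) = (INF v\<in>V. h u v))"

definition semi_overlap :: "(real \<Rightarrow> real \<Rightarrow> real) \<Rightarrow> bool" where
  "semi_overlap SO \<longleftrightarrow>
     maps_unit SO \<and>
     commutative_unit SO \<and>
     (\<forall>u\<in>{0..1}. \<forall>v\<in>{0..1}. u * v = 0 \<longrightarrow> SO u v = 0) \<and>
     (\<forall>u\<in>{0..1}. \<forall>v\<in>{0..1}. u * v = 1 \<longrightarrow> SO u v = 1) \<and>
     increasing_unit SO \<and>
     left_continuous_unit SO"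

end

theory Submission
  imports Defs
begin

text \<open>For the forward direction take \<open>f = SO\<close> and \<open>g = 1 - SO\<close>, so that \<open>f + g = 1\<close>.
  Conversely, \<open>SO = f / (f + g)\<close> inherits monotonicity from \<open>f\<close> increasing and \<open>g\<close>
  decreasing. Right-continuity of the denominator \<open>h = f + g\<close> forces it to be increasing, and
  then \<open>f v = SO v * h v \<le> (SUP SO) * h (Sup V)\<close> for \<open>v \<in> V\<close>; taking the supremum and using
  left-continuity of \<open>f\<close> gives \<open>SO (Sup V) \<le> SUP SO\<close>, the other inequality being monotonicity.\<close>

lemma divide_add_mono:
  fixes a b c d :: "'a::linordered_field"
  assumes "0 \<le> a" "a \<le> c" "0 \<le> d" "d \<le> b" "0 < a + b" "0 < c + d"
  shows "a / (a + b) \<le> c / (c + d)"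
proof -
  have "a * d \<le> c * b"
    using assms by (meson mult_mono order_trans)
  then have "a * (c + d) \<le> c * (a + b)"
    by (simp add: algebra_simps)
  then show ?thesis
    using assms(5,6) by (simp add: divide_simps mult.commute)
qed

lemma left_continuous_unitD:
  "left_continuous_unit h \<Longrightarrow> u \<in> {0..1} \<Longrightarrow> V \<noteq> {} \<Longrightarrow> V \<subseteq> {0..1} \<Longrightarrow>
    h u (Sup V) = (SUP v\<in>V. h u v)"
  unfolding left_continuous_unit_def by simp

lemma right_continuous_unitD:
  "right_continuous_unit h \<Longrightarrow> u \<in> {0..1} \<Longrightarrow> V \<noteq> {} \<Longrightarrow> V \<subseteq> {0..1} \<Longrightarrow>
    h u (Inf V) = (INF v\<in>V. h u v)"
  unfolding right_continuous_unit_def by simp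

lemma right_continuous_unit_mono:
  assumes "right_continuous_unit h" "u \<in> {0..1}" "a \<in> {0..1}" "b \<in> {0..1}" "a \<le> b"
  shows "h u a \<le> h u b"
proof -
  have "Inf {a, b} = a"
    using assms(5) by (intro cInf_eq_minimum) auto
  then have "h u a = Inf {h u a, h u b}"
    using right_continuous_unitD[OF assms(1,2), of "{a, b}"] assms(3,4) by simp
  also have "\<dots> \<le> h u b"
    by (rule cInf_lower) auto
  finally show ?thesis .
qed

lemma Sup_unit_interval:
  fixes V :: "real set"
  assumes "V \<noteq> {}" "V \<subseteq> {0..1}"
  shows "Sup V \<in> {0..1}" and "v \<in> V \<Longrightarrow> v \<le> Sup V"
proof -
  have bdd: "bdd_above V"
    by (rule bdd_above_mono[OF bdd_above_Icc assms(2)])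
  then show "v \<in> V \<Longrightarrow> v \<le> Sup V"
    by (simp add: cSup_upper)
  obtain w where "w \<in> V"
    using assms(1) by blast
  then have "0 \<le> Sup V"
    using assms(2) bdd by (meson atLeastAtMost_iff cSup_upper2 subsetD)
  moreover have "Sup V \<le> 1"
    using assms by (intro cSup_least) auto
  ultimately show "Sup V \<in> {0..1}"
    by simp
qed

lemma increasing_unit_quotient:
  assumes f: "increasing_unit f" and g: "decreasing_unit g"
    and nonneg: "\<And>u v. u \<in> {0..1} \<Longrightarrow> v \<in> {0..1} \<Longrightarrow> 0 \<le> f u v \<and> 0 \<le> g u v"
    and pos: "\<And>u v. u \<in> {0..1} \<Longrightarrow> v \<in> {0..1} \<Longrightarrow> 0 < f u v + g u v"
    and q: "\<And>u v. u \<in> {0..1} \<Longrightarrow> v \<in> {0..1} \<Longrightarrow> q u v = f u v / (f u v + g u v)"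
  shows "increasing_unit q"
proof -
  have le: "q a b \<le> q c d"
    if "a \<in> {0..1}" "b \<in> {0..1}" "c \<in> {0..1}" "d \<in> {0..1}"
      "f a b \<le> f c d" "g c d \<le> g a b" for a b c d
    using that nonneg pos q by (simp add: divide_add_mono)
  show ?thesis
    using f g unfolding increasing_unit_def decreasing_unit_def by (auto intro!: le)
qed

lemma left_continuous_unit_quotient:
  assumes f: "left_continuous_unit f" and h: "right_continuous_unit h"
    and pos: "\<And>u v. u \<in> {0..1} \<Longrightarrow> v \<in> {0..1} \<Longrightarrow> 0 < h u v"
    and q: "\<And>u v. u \<in> {0..1} \<Longrightarrow> v \<in> {0..1} \<Longrightarrow> q u v = f u v / h u v"
    and nonneg: "\<And>u v. u \<in> {0..1} \<Longrightarrow> v \<in> {0..1} \<Longrightarrow> 0 \<le> q u v"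
    and mono: "increasing_unit q"
  shows "left_continuous_unit q"
  unfolding left_continuous_unit_def
proof (intro ballI allI impI)
  fix u :: real and V :: "real set"
  assume u: "u \<in> {0..1}" and V: "V \<noteq> {} \<and> V \<subseteq> {0..1}"
  define s where "s = Sup V"
  define S where "S = (SUP v\<in>V. q u v)"
  have V01: "v \<in> {0..1}" if "v \<in> V" for v
    using that V by blast
  have s01: "s \<in> {0..1}" and le_s: "v \<in> V \<Longrightarrow> v \<le> s" for v
    unfolding s_def using V Sup_unit_interval by blast+
  have q_le: "q u v \<le> q u s" if "v \<in> V" for v
    using mono u V01[OF that] s01 le_s[OF that] unfolding increasing_unit_def by blast
  have bdd: "bdd_above (q u ` V)"
    using q_le by (intro bdd_aboveI2)
  have S_nonneg: "0 \<le> S"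
    unfolding S_def using V nonneg[OF u V01] by (metis all_not_in_conv bdd cSUP_upper2)
  have "f u v \<le> S * h u s" if v: "v \<in> V" for v
  proof -
    have "f u v = q u v * h u v"
      using q[OF u V01[OF v]] pos[OF u V01[OF v]] by simp
    also have "\<dots> \<le> S * h u v"
      unfolding S_def using cSUP_upper[OF v bdd] pos[OF u V01[OF v]] by simp
    also have "\<dots> \<le> S * h u s"
      using right_continuous_unit_mono[OF h u V01[OF v] s01 le_s[OF v]] S_nonneg
      by (simp add: mult_left_mono)
    finally show ?thesis .
  qed
  then have "f u s \<le> S * h u s"
    using left_continuous_unitD[OF f u] V unfolding s_def by (simp add: cSUP_least)
  then have "q u s \<le> S"
    using q[OF u s01] pos[OF u s01] by (simp add: pos_divide_le_eq)
  moreover have "S \<le> q u s"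
    unfolding S_def using V q_le by (simp add: cSUP_least)
  ultimately show "q u (Sup V) = (SUP v\<in>V. q u v)"
    unfolding s_def S_def by simp
qed

lemma semi_overlap_quotient:
  assumes SO: "maps_unit SO" and f: "maps_unit f" and g: "maps_unit g"
    and quot: "\<forall>u\<in>{0..1}. \<forall>v\<in>{0..1}. SO u v = f u v / (f u v + g u v)"
    and nz: "\<forall>u\<in>{0..1}. \<forall>v\<in>{0..1}. f u v + g u v \<noteq> 0"
    and comm_f: "commutative_unit f" and comm_g: "commutative_unit g"
    and f_zero: "\<forall>u\<in>{0..1}. \<forall>v\<in>{0..1}. u * v = 0 \<longrightarrow> f u v = 0"
    and g_zero: "\<forall>u\<in>{0..1}. \<forall>v\<in>{0..1}. u * v = 1 \<longrightarrow> g u v = 0"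
    and inc_f: "increasing_unit f" and dec_g: "decreasing_unit g"
    and lc_f: "left_continuous_unit f"
    and rc_h: "right_continuous_unit (\<lambda>u v. f u v + g u v)"
  shows "semi_overlap SO"
proof -
  have nonneg: "0 \<le> f u v \<and> 0 \<le> g u v" "0 \<le> SO u v"
    if "u \<in> {0..1}" "v \<in> {0..1}" for u v
    using SO f g that unfolding maps_unit_def by auto
  have pos: "0 < f u v + g u v" if "u \<in> {0..1}" "v \<in> {0..1}" for u v
    using nonneg(1)[OF that] nz that by force
  have SO_eq: "SO u v = f u v / (f u v + g u v)" if "u \<in> {0..1}" "v \<in> {0..1}" for u v
    using quot that by blast
  have inc_SO: "increasing_unit SO"
    using inc_f dec_g nonneg(1) pos SO_eq by (rule increasing_unit_quotient)
  have "left_continuous_unit SO"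
    using lc_f rc_h pos SO_eq nonneg(2) inc_SO by (rule left_continuous_unit_quotient)
  moreover have "commutative_unit SO"
    using quot comm_f comm_g unfolding commutative_unit_def by simp
  moreover have "\<forall>u\<in>{0..1}. \<forall>v\<in>{0..1}. u * v = 0 \<longrightarrow> SO u v = 0"
    using quot f_zero by simp
  moreover have "\<forall>u\<in>{0..1}. \<forall>v\<in>{0..1}. u * v = 1 \<longrightarrow> SO u v = 1"
    using quot g_zero nz by force
  ultimately show ?thesis
    unfolding semi_overlap_def using SO inc_SO by blast
qed

lemma semi_overlap_complement_quotient:
  assumes "semi_overlap SO"
  defines "g \<equiv> \<lambda>u v. 1 - SO u v"
  shows "maps_unit g" "\<forall>u\<in>{0..1}. \<forall>v\<in>{0..1}. SO u v = SO u v / (SO u v + g u v)"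
    "\<forall>u\<in>{0..1}. \<forall>v\<in>{0..1}. SO u v + g u v \<noteq> 0"
    "commutative_unit g" "\<forall>u\<in>{0..1}. \<forall>v\<in>{0..1}. u * v = 1 \<longrightarrow> g u v = 0"
    "decreasing_unit g" "right_continuous_unit (\<lambda>u v. SO u v + g u v)"
proof -
  have SO: "maps_unit SO" "commutative_unit SO" "increasing_unit SO"
    "\<forall>u\<in>{0..1}. \<forall>v\<in>{0..1}. u * v = 1 \<longrightarrow> SO u v = 1"
    using assms(1) unfolding semi_overlap_def by blast+
  have one: "(\<lambda>u v. SO u v + g u v) = (\<lambda>u v. 1)"
    unfolding g_def by simp
  show "maps_unit g"
    using SO(1) unfolding maps_unit_def g_def by auto
  show "\<forall>u\<in>{0..1}. \<forall>v\<in>{0..1}. SO u v = SO u v / (SO u v + g u v)"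
    "\<forall>u\<in>{0..1}. \<forall>v\<in>{0..1}. SO u v + g u v \<noteq> 0"
    unfolding g_def by simp_all
  show "commutative_unit g"
    using SO(2) unfolding commutative_unit_def g_def by simp
  show "\<forall>u\<in>{0..1}. \<forall>v\<in>{0..1}. u * v = 1 \<longrightarrow> g u v = 0"
    using SO(4) unfolding g_def by simp
  show "decreasing_unit g"
    using SO(3) unfolding increasing_unit_def decreasing_unit_def g_def by simp
  show "right_continuous_unit (\<lambda>u v. SO u v + g u v)"
    unfolding one right_continuous_unit_def by simp
qed

theorem theorem3p6:
  fixes SO :: "real \<Rightarrow> real \<Rightarrow> real"
  assumes "maps_unit SO"
  shows "semi_overlap SO \<longleftrightarrow>
    (\<exists>f g :: real \<Rightarrow> real \<Rightarrow> real.
       maps_unit f \<and> maps_unit g \<and>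
       (\<forall>u\<in>{0..1}. \<forall>v\<in>{0..1}. SO u v = f u v / (f u v + g u v)) \<and>
       (\<forall>u\<in>{0..1}. \<forall>v\<in>{0..1}. f u v + g u v \<noteq> 0) \<and>
       commutative_unit f \<and> commutative_unit g \<and>
       (\<forall>u\<in>{0..1}. \<forall>v\<in>{0..1}. u * v = 0 \<longrightarrow> f u v = 0) \<and>
       (\<forall>u\<in>{0..1}. \<forall>v\<in>{0..1}. u * v = 1 \<longrightarrow> g u v = 0) \<and>
       increasing_unit f \<and> decreasing_unit g \<and>
       left_continuous_unit f \<and>
       right_continuous_unit (\<lambda>u v. f u v + g u v))" (is "_ \<longleftrightarrow> ?quotient_form")
proof
  assume SO: "semi_overlap SO"
  then have "commutative_unit SO" "increasing_unit SO" "left_continuous_unit SO"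
    "\<forall>u\<in>{0..1}. \<forall>v\<in>{0..1}. u * v = 0 \<longrightarrow> SO u v = 0"
    unfolding semi_overlap_def by blast+
  with assms semi_overlap_complement_quotient[OF SO] show ?quotient_form
    by (intro exI[of _ SO] exI[of _ "\<lambda>u v. 1 - SO u v"] conjI) assumption+
next
  assume ?quotient_form
  then show "semi_overlap SO"
    by (elim exE conjE) (rule semi_overlap_quotient[OF assms])
qed

end
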